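(* Let $(\mathrm{Con},\sqsubseteq,(s_i)_{i\in G})$ be a spatial constraint system with distributed spaces $(\Delta_I)_{I\subseteq G}$. For all $c,e\in\mathrm{Con}$ and $I,J\subseteq G$: (1) $c\sqsupseteq\Delta_I(e)$ if and only if $\Pi_I(c)\sqsupseteq e$; (2) $\Pi_I(c)\sqsupseteq\Pi_J(c)$ if $J\subseteq I$; (3) $\Pi_I(c)\sqsupseteq\pi_I(c)$.
   Context: A constraint system (cs) is a complete lattice $(\mathrm{Con},\sqsubseteq)$ with join $\sqcup$, meet $\sqcap$, bottom $\mathit{true}$, top $\mathit{false}$. A space function is a continuous (directed-join preserving) self-map $f$ on $\mathrm{Con}$ with $f(\mathit{true})=\mathit{true}$ and $f(c\sqcup d)=f(c)\sqcup f(d)$; $\mathcal{S}(\mathrm{Con})$ denotes the set of space functions ordered pointwise ($f\preceq g$ iff $f(c)\sqsubseteq g(c)$ for all $c$). A spatial constraint system $(\mathrm{Con},\sqsubseteq,(s_i)_{i\in G})$ is a cs with space functions $s_i$ indexed by an arbitrary set $G$. Distributed spaces: $\Delta_I=\max\{f\in\mathcal{S}(\mathrm{Con}) : f\preceq s_i\text{ for all }i\in I\}$ (this maximum exists). Agent projection: $\pi_i(c)=\bigsqcup\{e : c\sqsupseteq s_i(e)\}$; join projection: $\pi_I(c)=\bigsqcup\{\pi_i(c): i\in I\}$; group projection: $\Pi_I(c)=\bigsqcup\{e : c\sqsupseteq\Delta_I(e)\}$. *)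

theory Defs
  imports Main
begin

text \<open>Constraint system: a complete lattice 'a with order \<le> (the paper's \<sqsubseteq>),
  bottom = true, top = false.\<close>

definition directed :: "'a::complete_lattice set \<Rightarrow> bool" where
  "directed D \<longleftrightarrow> D \<noteq> {} \<and> (\<forall>a\<in>D. \<forall>b\<in>D. \<exists>c\<in>D. a \<le> c \<and> b \<le> c)"

definition space_fun :: "('a::complete_lattice \<Rightarrow> 'a) \<Rightarrow> bool" where
  "space_fun f \<longleftrightarrow>
     (\<forall>D. directed D \<longrightarrow> f (Sup D) = Sup (f ` D)) \<and>
     f bot = bot \<and>
     (\<forall>c d. f (sup c d) = sup (f c) (f d))"

definition spatial_cs :: "('g \<Rightarrow> 'a::complete_lattice \<Rightarrow> 'a) \<Rightarrow> bool" where
  "spatial_cs s \<longleftrightarrow> (\<forall>i. space_fun (s i))"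

definition dist_space :: "('g \<Rightarrow> 'a::complete_lattice \<Rightarrow> 'a) \<Rightarrow> 'g set \<Rightarrow> 'a \<Rightarrow> 'a" where
  "dist_space s I = (GREATEST f. space_fun f \<and> (\<forall>i\<in>I. f \<le> s i))"

definition agent_proj :: "('g \<Rightarrow> 'a::complete_lattice \<Rightarrow> 'a) \<Rightarrow> 'g \<Rightarrow> 'a \<Rightarrow> 'a" where
  "agent_proj s i c = Sup {e. s i e \<le> c}"

definition join_proj :: "('g \<Rightarrow> 'a::complete_lattice \<Rightarrow> 'a) \<Rightarrow> 'g set \<Rightarrow> 'a \<Rightarrow> 'a" where
  "join_proj s I c = Sup {agent_proj s i c | i. i \<in> I}"

definition group_proj :: "('g \<Rightarrow> 'a::complete_lattice \<Rightarrow> 'a) \<Rightarrow> 'g set \<Rightarrow> 'a \<Rightarrow> 'a" where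
  "group_proj s I c = Sup {e. dist_space s I e \<le> c}"

end

theory Submission
  imports Defs
begin

text \<open>Pointwise suprema of space functions are again space functions, so the distributed
  space \<open>\<Delta>\<^sub>I\<close> is the supremum of all space functions below every \<open>s\<^sub>i\<close>, \<open>i \<in> I\<close>; in particular
  \<open>I \<mapsto> \<Delta>\<^sub>I\<close> is antitone and \<open>\<Delta>\<^sub>I \<le> s\<^sub>i\<close> for \<open>i \<in> I\<close>. A space function \<open>f\<close> preserves
  directed suprema and binary joins, so \<open>{e. f e \<le> c}\<close> is directed and contains its own
  supremum: \<open>e \<mapsto> f e\<close> is left adjoint to \<open>c \<mapsto> \<Squnion>{e. f e \<le> c}\<close>. Both the group and agent
  projections are such right adjoints, and the adjoint of a smaller function is larger.\<close>

definition space_proj :: "('a::complete_lattice \<Rightarrow> 'a) \<Rightarrow> 'a \<Rightarrow> 'a" where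
  "space_proj f c = Sup {e. f e \<le> c}"

lemma agent_proj_eq_space_proj: "agent_proj s i = space_proj (s i)"
  by (simp add: agent_proj_def space_proj_def fun_eq_iff)

lemma group_proj_eq_space_proj: "group_proj s I = space_proj (dist_space s I)"
  by (simp add: group_proj_def space_proj_def fun_eq_iff)

lemma space_proj_antimono: "f \<le> g \<Longrightarrow> space_proj g c \<le> space_proj f c"
  unfolding space_proj_def by (rule Sup_subset_mono) (auto dest: le_funD intro: order_trans)

lemma space_fun_mono:
  assumes "space_fun f" "a \<le> b"
  shows "f a \<le> f b"
proof -
  have "f b = sup (f a) (f b)"
    using assms by (metis space_fun_def sup.absorb2)
  then show ?thesis by (metis sup.cobounded1)
qed

lemma directed_space_fun_below:
  assumes "space_fun f"
  shows "directed {e. f e \<le> c}"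
  unfolding directed_def
proof (intro conjI ballI)
  have "bot \<in> {e. f e \<le> c}"
    using assms by (simp add: space_fun_def)
  then show "{e. f e \<le> c} \<noteq> {}" by blast
next
  fix a b assume "a \<in> {e. f e \<le> c}" "b \<in> {e. f e \<le> c}"
  then have "sup a b \<in> {e. f e \<le> c}"
    using assms by (simp add: space_fun_def)
  then show "\<exists>x\<in>{e. f e \<le> c}. a \<le> x \<and> b \<le> x" by auto
qed

lemma space_fun_le_iff_le_space_proj:
  assumes "space_fun f"
  shows "f e \<le> c \<longleftrightarrow> e \<le> space_proj f c"
proof
  assume "f e \<le> c"
  then show "e \<le> space_proj f c"
    unfolding space_proj_def by (simp add: Sup_upper)
next
  assume "e \<le> space_proj f c"
  then have "f e \<le> f (space_proj f c)"
    using assms by (rule space_fun_mono[rotated])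
  also have "f (space_proj f c) = Sup (f ` {e. f e \<le> c})"
    using assms directed_space_fun_below[OF assms] by (simp add: space_fun_def space_proj_def)
  also have "\<dots> \<le> c"
    by (rule SUP_least) simp
  finally show "f e \<le> c" .
qed

lemma space_fun_Sup:
  assumes "\<forall>f\<in>F. space_fun f"
  shows "space_fun (Sup F)"
  unfolding space_fun_def
proof (intro conjI allI impI)
  fix D :: "'a set" assume "directed D"
  have "Sup F (Sup D) = (SUP f\<in>F. SUP d\<in>D. f d)"
    using assms \<open>directed D\<close> by (simp add: space_fun_def)
  also have "\<dots> = (SUP d\<in>D. SUP f\<in>F. f d)"
    by (rule SUP_commute)
  finally show "Sup F (Sup D) = Sup (Sup F ` D)" by simp
next
  show "Sup F bot = bot"
    using assms by (simp add: space_fun_def)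
next
  fix c d :: 'a
  have "Sup F (sup c d) = (SUP f\<in>F. sup (f c) (f d))"
    using assms by (simp add: space_fun_def)
  also have "\<dots> = sup (Sup F c) (Sup F d)"
    unfolding Sup_apply by (rule Complete_Lattices.SUP_sup_distrib[symmetric])
  finally show "Sup F (sup c d) = sup (Sup F c) (Sup F d)" .
qed

lemma dist_space_eq_Sup:
  "dist_space s I = Sup {f. space_fun f \<and> (\<forall>i\<in>I. f \<le> s i)}"
  unfolding dist_space_def
proof (rule Greatest_equality)
  show "space_fun (Sup {f. space_fun f \<and> (\<forall>i\<in>I. f \<le> s i)})
    \<and> (\<forall>i\<in>I. Sup {f. space_fun f \<and> (\<forall>i\<in>I. f \<le> s i)} \<le> s i)"
    by (auto intro: space_fun_Sup Sup_least)
qed (simp add: Sup_upper)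

lemma space_fun_dist_space: "space_fun (dist_space s I)"
  unfolding dist_space_eq_Sup by (rule space_fun_Sup) blast

lemma dist_space_le: "i \<in> I \<Longrightarrow> dist_space s I \<le> s i"
  unfolding dist_space_eq_Sup by (rule Sup_least) blast

lemma dist_space_antimono: "J \<subseteq> I \<Longrightarrow> dist_space s I \<le> dist_space s J"
  unfolding dist_space_eq_Sup by (rule Sup_subset_mono) blast

theorem mainTheorem3:
  fixes s :: "'g \<Rightarrow> 'a::complete_lattice \<Rightarrow> 'a"
    and c e :: 'a and I J :: "'g set"
  assumes "spatial_cs s"
  shows "(dist_space s I e \<le> c \<longleftrightarrow> e \<le> group_proj s I c)
         \<and> (J \<subseteq> I \<longrightarrow> group_proj s J c \<le> group_proj s I c)
         \<and> join_proj s I c \<le> group_proj s I c"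
proof (intro conjI impI)
  show "dist_space s I e \<le> c \<longleftrightarrow> e \<le> group_proj s I c"
    unfolding group_proj_eq_space_proj
    by (rule space_fun_le_iff_le_space_proj[OF space_fun_dist_space])
next
  assume "J \<subseteq> I"
  then show "group_proj s J c \<le> group_proj s I c"
    unfolding group_proj_eq_space_proj by (intro space_proj_antimono dist_space_antimono)
next
  show "join_proj s I c \<le> group_proj s I c"
    unfolding join_proj_def agent_proj_eq_space_proj group_proj_eq_space_proj
    by (auto intro!: Sup_least space_proj_antimono dist_space_le)
qed

end
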